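(* The only pair of natural numbers $(x,y)$ (with $0 \in \mathbb{N}$) such that $7^x-5^y$ is a perfect square is $(0,0)$.
   Context: Here $\mathbb{N}=\{0,1,2,\dots\}$, and a perfect square means $n^2$ for some $n\in\mathbb{N}$. *)

theory Defs
  imports Main
begin

end

theory Submission
  imports Defs
begin

text \<open>Modulo 3 the difference \<open>7^x - 5^y\<close> is \<open>1 - 2^y\<close>, which is the non-square 2 when \<open>y\<close> is odd,
  so \<open>y = 2k\<close>. If moreover \<open>x \<ge> 1\<close>, then \<open>n\<^sup>2 + (5^k)\<^sup>2 = 7^x\<close> is divisible by 7; as \<open>-1\<close> is not a
  square modulo 7, this forces \<open>7 \<mid> 5^k\<close>, which is absurd. For \<open>x = 0\<close> the difference \<open>1 - 5^y\<close>
  is negative unless \<open>y = 0\<close>.\<close>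

lemma int_mod_cases:
  assumes "(0::int) < m"
  obtains i :: nat where "i < nat m" "r mod m = int i"
proof
  show "nat (r mod m) < nat m" "r mod m = int (nat (r mod m))"
    using assms by simp_all
qed

lemma square_mod_3_neq_2: "(r::int)^2 mod 3 \<noteq> 2"
proof -
  obtain i :: nat where i: "i < 3" "r mod 3 = int i"
    by (rule int_mod_cases[of 3 r]) simp_all
  have "r^2 mod 3 = (int i)^2 mod 3"
    by (simp only: power_mod[symmetric, of r] i(2))
  moreover have "\<forall>i<3::nat. (int i)^2 mod 3 \<noteq> 2"
    by (simp add: less_Suc_eq numeral_eq_Suc)
  ultimately show ?thesis
    using i(1) by metis
qed

lemma seven_dvd_sum_squares_imp_dvd:
  fixes a b :: int
  assumes "7 dvd a^2 + b^2"
  shows "7 dvd a"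
proof -
  obtain i :: nat where i: "i < 7" "a mod 7 = int i"
    by (rule int_mod_cases[of 7 a]) simp_all
  obtain j :: nat where j: "j < 7" "b mod 7 = int j"
    by (rule int_mod_cases[of 7 b]) simp_all
  have "((int i)^2 + (int j)^2) mod 7 = ((a mod 7)^2 + (b mod 7)^2) mod 7"
    by (simp only: i(2) j(2))
  also have "\<dots> = (a^2 + b^2) mod 7"
    by (simp only: mod_add_eq[symmetric, of "(a mod 7)^2"] mod_add_eq[symmetric, of "a^2"] power_mod)
  also have "\<dots> = 0"
    using assms by (simp only: dvd_eq_mod_eq_0)
  finally have ij: "((int i)^2 + (int j)^2) mod 7 = 0" .
  have "\<forall>i<7::nat. \<forall>j<7::nat. ((int i)^2 + (int j)^2) mod 7 = 0 \<longrightarrow> i = 0"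
    by (simp add: less_Suc_eq numeral_eq_Suc)
  then have "i = 0"
    using i(1) j(1) ij by metis
  with i(2) show ?thesis
    by (simp add: dvd_eq_mod_eq_0)
qed

lemma seven_not_dvd_power_five: "\<not> (7::int) dvd 5^k"
proof
  assume dvd: "(7::int) dvd 5^k"
  have "coprime (7::int) 5"
    by (simp add: coprime_iff_gcd_eq_1 gcd_red_int[of 7] gcd_red_int[of 5] gcd_red_int[of 2])
  then have "coprime (7::int) (5^k)"
    by (simp only: coprime_power_right_iff simp_thms)
  then have "is_unit (7::int)"
    using coprime_absorb_left[OF dvd] by blast
  then show False
    by simp
qed

lemma seven_pow_minus_five_pow_mod_3:
  assumes "odd y"
  shows "((7::int)^x - 5^y) mod 3 = 2"
proof -
  obtain k where y: "y = Suc (2 * k)"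
    using assms oddE by fastforce
  have "(7::int)^x mod 3 = (7 mod 3)^x mod 3"
    by (simp only: power_mod)
  then have seven: "(7::int)^x mod 3 = 1"
    by simp
  have "(5::int)^y = 5 * 25^k"
    by (simp add: y power_mult)
  also have "\<dots> mod 3 = 5 * ((25 mod 3)^k mod 3) mod 3"
    by (simp only: mod_mult_right_eq power_mod)
  finally have five: "(5::int)^y mod 3 = 2"
    by simp
  have "((7::int)^x - 5^y) mod 3 = ((7::int)^x mod 3 - 5^y mod 3) mod 3"
    by (simp only: mod_diff_eq)
  then show ?thesis
    by (simp only: seven five) simp
qed

theorem mainTheorem3:
  fixes x y :: nat
  shows "(\<exists>n::nat. (7::int) ^ x - 5 ^ y = int n ^ 2) \<longleftrightarrow> (x = 0 \<and> y = 0)"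
proof
  assume "\<exists>n::nat. (7::int) ^ x - 5 ^ y = int n ^ 2"
  then obtain n :: nat where n: "(7::int) ^ x - 5 ^ y = int n ^ 2"
    by blast
  have "even y"
    using seven_pow_minus_five_pow_mod_3[of y x] square_mod_3_neq_2[of "int n"] n by auto
  then obtain k where y: "y = 2 * k"
    by blast
  show "x = 0 \<and> y = 0"
  proof (cases "x = 0")
    case True
    with n have "(5::int)^y \<le> 1"
      by (smt (verit) zero_le_power2 power_0)
    with True show ?thesis
      by (simp add: power_le_one_iff)
  next
    case False
    have "(7::int)^x = (5^k)^2 + int n ^ 2"
      using n by (simp add: y power_mult mult.commute[of 2])
    moreover have "(7::int) dvd 7^x"
      using False by simp
    ultimately have "(7::int) dvd (5^k)^2 + int n ^ 2"
      by simp
    then show ?thesis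
      using seven_dvd_sum_squares_imp_dvd seven_not_dvd_power_five by blast
  qed
qed simp

end
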